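(* Let $d\ge2$, $j\in[d-1]$, $\tau=O(1)$ and $\mathbf p=\tau\bar{\mathbf p}$ for a $j$-admissible direction $\bar{\mathbf p}$, and let $\mathcal G_\tau=\mathcal G(n,\mathbf p)$. Let $\mathcal J$ be a collection of $O(1)$ many $(j+1)$-subsets of $[n]$ and $\mathcal S$ a collection of $O(1)$ many subsets of $[n]$ of sizes between $j+2$ and $d+1$. Let $A$ be the event that no set of $\mathcal J$ lies in any $k$-simplex $K$ of $\mathcal G_\tau$ with $j+1\le k\le d$ and $K\notin\mathcal S$. Then $\Pr(A)=(1+o(1))\bar q^{\,\tau|\mathcal J|}$, where $\bar q=\prod_{k=j+1}^d(1-\bar p_k)^{\binom{n-j-1}{k-j}}$.
   Context: $\mathcal G(n,\mathbf p)$: random simplicial complex on $[n]$ where for each $k\in[d]$ each $(k+1)$-subset of $[n]$ is independently an edge with probability $\min\{p_k,1\}$; the complex consists of all singletons and all nonempty subsets of edges; $i$-simplices are members of size $i+1$. Asymptotics as $n\to\infty$. $j$-admissible: $\bar{\mathbf p}=(\bar p_1,\dots,\bar p_d)$ is $j$-admissible if for each $1\le k\le d$ there are real constants $\bar\alpha_k,\bar\gamma_k$ and a function $\bar\beta_k(n)$ with $\bar p_k=\frac{\bar\alpha_k\log n+\bar\beta_k}{n^{k-j+\bar\gamma_k}}(k-j)!$ and (A1) at least one of $\bar\alpha_k,\bar\gamma_k$ is zero and neither negative; (A2) if $\bar\alpha_k=0$ then $\bar\beta_k\equiv0$ or $\bar\beta_k>0$ with $\bar\beta_k=o(n^\varepsilon)$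 and $\bar\beta_k=\omega(n^{-\varepsilon})$ for every constant $\varepsilon>0$; (A3) if $\bar\gamma_k=0$ then $|\bar\beta_k|=o(\log n)$; (A4) some $k_0\in\{j+1,\dots,d\}$ has $\bar\alpha_{k_0}>0$. *)

theory Defs
  imports "HOL-Probability.Probability" "HOL-Library.Landau_Symbols"
begin

definition candidate_edges :: "nat \<Rightarrow> nat \<Rightarrow> nat set set" where
  "candidate_edges d n = {e. e \<subseteq> {1..n} \<and> 2 \<le> card e \<and> card e \<le> d + 1}"

text \<open>The random complex G(n,p): an outcome G is the indicator of the edge set;
  a (k+1)-set is an edge independently with probability min (p k n) 1
  (bernoulli_pmf additionally clamps at 0).\<close>
definition random_complex :: "nat \<Rightarrow> (nat \<Rightarrow> nat \<Rightarrow> real) \<Rightarrow> nat \<Rightarrow> (nat set \<Rightarrow> bool) pmf" where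
  "random_complex d p n =
     Pi_pmf (candidate_edges d n) False (\<lambda>e. bernoulli_pmf (min (p (card e - 1) n) 1))"

definition is_simplex :: "nat \<Rightarrow> (nat set \<Rightarrow> bool) \<Rightarrow> nat set \<Rightarrow> bool" where
  "is_simplex n G K \<longleftrightarrow> K \<subseteq> {1..n} \<and> K \<noteq> {} \<and> (card K = 1 \<or> (\<exists>e. G e \<and> K \<subseteq> e))"

definition event_A :: "nat \<Rightarrow> nat \<Rightarrow> nat \<Rightarrow> nat set set \<Rightarrow> nat set set \<Rightarrow> (nat set \<Rightarrow> bool) \<Rightarrow> bool" where
  "event_A n d j J S G \<longleftrightarrow>
     \<not> (\<exists>I\<in>J. \<exists>K. I \<subseteq> K \<and> j + 2 \<le> card K \<and> card K \<le> d + 1 \<and> K \<notin> S \<and> is_simplex n G K)"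

text \<open>j-admissible direction pbar (pbar k n is the k-th coordinate at n).
  For k < j the factorial (k-j)! is read as 1 (nat subtraction); these coordinates are
  irrelevant for the statement below.\<close>
definition j_admissible :: "nat \<Rightarrow> nat \<Rightarrow> (nat \<Rightarrow> nat \<Rightarrow> real) \<Rightarrow> bool" where
  "j_admissible d j pbar \<longleftrightarrow>
     (\<exists>(\<alpha>::nat \<Rightarrow> real) (\<gamma>::nat \<Rightarrow> real) (\<beta>::nat \<Rightarrow> nat \<Rightarrow> real).
        (\<forall>k\<in>{1..d}.
           (\<forall>n. pbar k n = (\<alpha> k * ln (real n) + \<beta> k n)
                 / real n powr (real k - real j + \<gamma> k) * fact (k - j))
         \<and> (\<alpha> k = 0 \<or> \<gamma> k = 0) \<and> \<alpha> k \<ge> 0 \<and> \<gamma> k \<ge> 0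
         \<and> (\<alpha> k = 0 \<longrightarrow>
              ((\<forall>n. \<beta> k n = 0) \<or>
               ((\<forall>n. \<beta> k n > 0) \<and>
                (\<forall>\<epsilon>>0. \<beta> k \<in> o(\<lambda>n. real n powr \<epsilon>) \<and> \<beta> k \<in> \<omega>(\<lambda>n. real n powr (-\<epsilon>))))))
         \<and> (\<gamma> k = 0 \<longrightarrow> (\<lambda>n. \<bar>\<beta> k n\<bar>) \<in> o(\<lambda>n. ln (real n))))
      \<and> (\<exists>k0\<in>{j+1..d}. \<alpha> k0 > 0))"

definition qbar :: "nat \<Rightarrow> nat \<Rightarrow> (nat \<Rightarrow> nat \<Rightarrow> real) \<Rightarrow> nat \<Rightarrow> real" where
  "qbar d j pbar n = (\<Prod>k\<in>{j+1..d}. (1 - pbar k n) ^ ((n - j - 1) choose (k - j)))"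

end

theory Submission
  imports Defs "HOL-Real_Asymp.Real_Asymp"
begin

text \<open>
  Since the edges are independent, \<open>A\<close> is the event that no forbidden edge is present, an edge
  being forbidden if it contains some \<open>K \<supseteq> I \<in> \<J>\<close> with \<open>|K| \<ge> j + 2\<close> and \<open>K \<notin> \<S>\<close>. So
  \<open>ln Pr(A)\<close> is the sum of \<open>ln (1 - \<tau> p\<^sub>e)\<close> over the forbidden edges, while counting shows that
  \<open>\<tau> |\<J>| ln qbar\<close> is the sum of \<open>\<tau> ln (1 - p\<^sub>e)\<close> over all pairs \<open>(I, e)\<close> with \<open>I \<in> \<J>\<close> and \<open>e\<close>
  a proper coface of \<open>I\<close>. The two sums differ only by the cofaces lying in \<open>\<S>\<close>, by the cofaces
  shared by two members of \<open>\<J>\<close> (these contain a fixed \<open>(j + 2)\<close>-set), and by the second-order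
  terms of the logarithms. Admissibility gives \<open>p\<^sub>k = O(log n / n\<^sup>k\<^sup>-\<^sup>j)\<close>: a single edge has
  probability \<open>O(log n / n)\<close>, the cofaces of a \<open>(j + 1)\<close>-set have total probability \<open>O(log n)\<close>
  and those of a \<open>(j + 2)\<close>-set \<open>O(log n / n)\<close>, so all three errors are \<open>O(log\<^sup>2 n / n)\<close>.
\<close>

definition supersets :: "nat \<Rightarrow> nat set \<Rightarrow> nat \<Rightarrow> nat \<Rightarrow> nat set set" where
  "supersets n L a b = {e. e \<subseteq> {1..n} \<and> L \<subseteq> e \<and> a \<le> card e \<and> card e \<le> b}"

lemma finite_supersets [simp]: "finite (supersets n L a b)"
  unfolding supersets_def by (rule rev_finite_subset[of "Pow {1..n}"]) auto

lemma card_supersets_eq: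
  assumes "finite A" "L \<subseteq> A" "card L \<le> s"
  shows "card {e. e \<subseteq> A \<and> L \<subseteq> e \<and> card e = s} = (card A - card L) choose (s - card L)"
proof -
  have "finite L" using assms finite_subset by blast
  have "bij_betw (\<lambda>e. e - L) {e. e \<subseteq> A \<and> L \<subseteq> e \<and> card e = s} {B. B \<subseteq> A - L \<and> card B = s - card L}"
  proof (rule bij_betw_byWitness[where f' = "\<lambda>B. B \<union> L"])
    show "(\<lambda>e. e - L) ` {e. e \<subseteq> A \<and> L \<subseteq> e \<and> card e = s} \<subseteq> {B. B \<subseteq> A - L \<and> card B = s - card L}"
      using assms \<open>finite L\<close> by (auto intro!: card_Diff_subset dest: finite_subset)
    have "card (B \<union> L) = s" if "B \<subseteq> A - L" "card B = s - card L" for B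
    proof -
      have "finite B" using that assms(1) finite_subset by blast
      then have "card (B \<union> L) = card B + card L"
        using that \<open>finite L\<close> by (intro card_Un_disjoint) auto
      with that assms(3) show ?thesis by simp
    qed
    then show "(\<lambda>B. B \<union> L) ` {B. B \<subseteq> A - L \<and> card B = s - card L} \<subseteq> {e. e \<subseteq> A \<and> L \<subseteq> e \<and> card e = s}"
      using assms by auto
  qed auto
  then have "card {e. e \<subseteq> A \<and> L \<subseteq> e \<and> card e = s} = card (A - L) choose (s - card L)"
    using assms(1) by (simp add: bij_betw_same_card n_subsets)
  with assms \<open>finite L\<close> show ?thesis by (simp add: card_Diff_subset)
qed

lemma sum_supersets_of_card:
  fixes \<phi> :: "nat \<Rightarrow> real"
  assumes "L \<subseteq> {1..n}" "card L \<le> a"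
  shows "(\<Sum>e\<in>supersets n L a b. \<phi> (card e)) = (\<Sum>s=a..b. real ((n - card L) choose (s - card L)) * \<phi> s)"
proof -
  let ?E = "\<lambda>s. {e. e \<subseteq> {1..n} \<and> L \<subseteq> e \<and> card e = s}"
  have fin: "finite (?E s)" for s
    by (rule rev_finite_subset[of "Pow {1..n}"]) auto
  have eq: "supersets n L a b = (\<Union>s\<in>{a..b}. ?E s)"
    unfolding supersets_def by auto
  have "(\<Sum>e\<in>supersets n L a b. \<phi> (card e)) = (\<Sum>s=a..b. \<Sum>e\<in>?E s. \<phi> (card e))"
    unfolding eq by (rule sum.UNION_disjoint) (use fin in auto)
  also have "\<dots> = (\<Sum>s=a..b. real (card (?E s)) * \<phi> s)"
    by simp
  also have "\<dots> = (\<Sum>s=a..b. real ((n - card L) choose (s - card L)) * \<phi> s)"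
    using assms by (intro sum.cong) (auto simp: card_supersets_eq)
  finally show ?thesis .
qed

lemma sum_supersets_shift:
  fixes \<phi> :: "nat \<Rightarrow> real"
  assumes "I \<subseteq> {1..n}" "card I = j + 1"
  shows "(\<Sum>e\<in>supersets n I (j + 2) (d + 1). \<phi> (card e - 1))
           = (\<Sum>k=j+1..d. real ((n - j - 1) choose (k - j)) * \<phi> k)"
proof -
  have "(\<Sum>e\<in>supersets n I (j + 2) (d + 1). \<phi> (card e - 1))
      = (\<Sum>s=Suc (j+1)..Suc d. real ((n - (j + 1)) choose (s - (j + 1))) * \<phi> (s - 1))"
    using sum_supersets_of_card[of I n "j + 2" "\<lambda>s. \<phi> (s - 1)"] assms by simp
  also have "\<dots> = (\<Sum>k=j+1..d. real ((n - j - 1) choose (k - j)) * \<phi> k)"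
    by (subst sum.shift_bounds_cl_Suc_ivl) simp
  finally show ?thesis .
qed

lemma sum_UN_le:
  fixes h :: "'a \<Rightarrow> real"
  assumes "finite J" "\<And>I. I \<in> J \<Longrightarrow> finite (E I)" "\<And>x. x \<in> \<Union>(E ` J) \<Longrightarrow> 0 \<le> h x"
  shows "sum h (\<Union>(E ` J)) \<le> (\<Sum>I\<in>J. sum h (E I))"
  using assms
proof (induction J rule: finite_induct)
  case (insert a J)
  have "0 \<le> sum h (E a \<inter> \<Union>(E ` J))"
    using insert.prems by (intro sum_nonneg) auto
  then have "sum h (E a \<union> \<Union>(E ` J)) \<le> sum h (E a) + sum h (\<Union>(E ` J))"
    using insert by (simp add: sum_Un)
  also have "\<dots> \<le> sum h (E a) + (\<Sum>I\<in>J. sum h (E I))"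
    using insert by simp
  finally show ?case using insert by simp
qed simp

lemma sum_UN_Bonferroni:
  fixes h :: "'a \<Rightarrow> real"
  assumes "finite J" "\<And>I. I \<in> J \<Longrightarrow> finite (E I)" "\<And>x. x \<in> \<Union>(E ` J) \<Longrightarrow> 0 \<le> h x"
  shows "(\<Sum>I\<in>J. sum h (E I)) \<le> sum h (\<Union>(E ` J)) + (\<Sum>I\<in>J. \<Sum>I'\<in>J - {I}. sum h (E I \<inter> E I'))"
proof -
  define D where "D I = E I - \<Union>(E ` (J - {I}))" for I
  have "sum h (E I) \<le> sum h (D I) + (\<Sum>I'\<in>J - {I}. sum h (E I \<inter> E I'))" if "I \<in> J" for I
  proof -
    have "E I \<inter> \<Union>(E ` (J - {I})) = (\<Union>I'\<in>J - {I}. E I \<inter> E I')"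
      by blast
    then have "sum h (E I) = sum h (\<Union>I'\<in>J - {I}. E I \<inter> E I') + sum h (D I)"
      unfolding D_def using sum.Int_Diff[OF assms(2)[OF that]] by metis
    moreover have "sum h (\<Union>I'\<in>J - {I}. E I \<inter> E I') \<le> (\<Sum>I'\<in>J - {I}. sum h (E I \<inter> E I'))"
      by (rule sum_UN_le) (use assms that in auto)
    ultimately show ?thesis by linarith
  qed
  then have "(\<Sum>I\<in>J. sum h (E I)) \<le> (\<Sum>I\<in>J. sum h (D I) + (\<Sum>I'\<in>J - {I}. sum h (E I \<inter> E I')))"
    by (rule sum_mono)
  also have "\<dots> = (\<Sum>I\<in>J. sum h (D I)) + (\<Sum>I\<in>J. \<Sum>I'\<in>J - {I}. sum h (E I \<inter> E I'))"
    by (rule sum.distrib)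
  also have "(\<Sum>I\<in>J. sum h (D I)) = sum h (\<Union>(D ` J))"
    by (rule sum.UNION_disjoint[symmetric]) (use assms(1,2) in \<open>auto simp: D_def\<close>)
  also have "\<dots> \<le> sum h (\<Union>(E ` J))"
    by (rule sum_mono2) (use assms in \<open>auto simp: D_def\<close>)
  finally show ?thesis by simp
qed

lemma sum_UN_approx:
  fixes f g :: "'a \<Rightarrow> real"
  assumes "finite J" "\<And>I. I \<in> J \<Longrightarrow> finite (E I)"
    and "B \<subseteq> \<Union>(E ` J)" "\<Union>(E ` J) \<subseteq> B \<union> S"
    and "\<And>x. x \<in> \<Union>(E ` J) \<Longrightarrow> 0 \<le> f x" "\<And>x. x \<in> \<Union>(E ` J) \<Longrightarrow> 0 \<le> g x"
  shows "\<bar>sum f B - (\<Sum>I\<in>J. sum g (E I))\<bar>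
           \<le> (\<Sum>I\<in>J. \<Sum>x\<in>E I. \<bar>f x - g x\<bar>) + sum f (\<Union>(E ` J) \<inter> S)
             + (\<Sum>I\<in>J. \<Sum>I'\<in>J - {I}. sum g (E I \<inter> E I'))"
proof -
  let ?U = "\<Union>(E ` J)"
  let ?D = "\<Sum>I\<in>J. \<Sum>x\<in>E I. \<bar>f x - g x\<bar>"
  have finU: "finite ?U" using assms(1,2) by blast
  have "sum f B \<le> sum f ?U"
    using assms by (intro sum_mono2 finU) auto
  also have "\<dots> \<le> (\<Sum>I\<in>J. sum f (E I))"
    using assms by (intro sum_UN_le) auto
  also have "\<dots> \<le> (\<Sum>I\<in>J. sum g (E I)) + ?D"
    by (simp add: sum.distrib[symmetric] sum_mono sum_subtractf[symmetric])
  finally have upper: "sum f B \<le> (\<Sum>I\<in>J. sum g (E I)) + ?D" .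
  have "(\<Sum>I\<in>J. sum g (E I)) \<le> sum g ?U + (\<Sum>I\<in>J. \<Sum>I'\<in>J - {I}. sum g (E I \<inter> E I'))"
    using assms by (intro sum_UN_Bonferroni) auto
  moreover have "sum g ?U \<le> sum f ?U + (\<Sum>x\<in>?U. \<bar>f x - g x\<bar>)"
    by (simp add: sum.distrib[symmetric] sum_mono)
  moreover have "(\<Sum>x\<in>?U. \<bar>f x - g x\<bar>) \<le> ?D"
    using assms by (intro sum_UN_le) auto
  moreover have "sum f ?U \<le> sum f B + sum f (?U \<inter> S)"
  proof -
    have "sum f ?U \<le> sum f (B \<union> (?U \<inter> S))"
      using assms finU by (intro sum_mono2) (auto dest: finite_subset)
    also have "\<dots> \<le> sum f B + sum f (?U \<inter> S)"
    proof -
      have "0 \<le> sum f (B \<inter> (?U \<inter> S))"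
        using assms(5) by (intro sum_nonneg) blast
      then show ?thesis
        using assms finU by (subst sum_Un) (auto dest: finite_subset)
    qed
    finally show ?thesis .
  qed
  moreover have "0 \<le> sum f (?U \<inter> S)"
    using assms(5) by (intro sum_nonneg) blast
  moreover have "0 \<le> (\<Sum>I\<in>J. \<Sum>I'\<in>J - {I}. sum g (E I \<inter> E I'))"
    using assms(6) by (intro sum_nonneg) blast
  ultimately show ?thesis
    using upper unfolding abs_le_iff by linarith
qed

lemma ln_one_minus_bounds:
  fixes y :: real
  assumes "0 \<le> y" "y \<le> 1/2"
  shows "0 \<le> - ln (1 - y)" "- ln (1 - y) \<le> 2 * y" "\<bar>ln (1 - y) + y\<bar> \<le> 2 * y\<^sup>2"
proof -
  show "0 \<le> - ln (1 - y)" using assms by simp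
  have "y * (2 * y) \<le> y * 1" using assms by (intro mult_left_mono) auto
  then show "- ln (1 - y) \<le> 2 * y"
    using ln_one_minus_pos_lower_bound[OF assms] by (simp add: power2_eq_square)
  show "\<bar>ln (1 - y) + y\<bar> \<le> 2 * y\<^sup>2"
    using abs_ln_one_plus_x_minus_x_bound[of "- y"] assms by simp
qed

lemma ln_one_minus_scaled_approx:
  fixes t y :: real
  assumes "0 \<le> t" "0 \<le> y" "y \<le> 1/2" "t * y \<le> 1/2"
  shows "\<bar>ln (1 - t * y) - t * ln (1 - y)\<bar> \<le> 2 * (t\<^sup>2 + t) * y\<^sup>2"
proof -
  have "\<bar>ln (1 - t * y) + t * y\<bar> \<le> 2 * (t * y)\<^sup>2"
    using assms by (intro ln_one_minus_bounds) auto
  moreover have "\<bar>t * (ln (1 - y) + y)\<bar> \<le> t * (2 * y\<^sup>2)"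
    using assms ln_one_minus_bounds(3)[of y] by (simp add: abs_mult mult_left_mono)
  ultimately have "\<bar>(ln (1 - t * y) + t * y) - t * (ln (1 - y) + y)\<bar> \<le> 2 * (t * y)\<^sup>2 + t * (2 * y\<^sup>2)"
    by (smt (verit))
  then show ?thesis by (simp add: algebra_simps power_mult_distrib)
qed

lemma ln_one_minus_scaled_bounds:
  fixes t T w :: real
  assumes "0 \<le> t" "t \<le> T" "1 \<le> T" "0 \<le> w" "T * w \<le> 1/2"
  shows "0 \<le> - ln (1 - t * w)" "- ln (1 - t * w) \<le> 2 * T * w"
    and "0 \<le> - (t * ln (1 - w))" "- (t * ln (1 - w)) \<le> 2 * T * w"
    and "\<bar>ln (1 - t * w) - t * ln (1 - w)\<bar> \<le> 2 * (T\<^sup>2 + T) * w\<^sup>2"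
proof -
  have tw: "t * w \<le> T * w" using assms by (intro mult_right_mono) auto
  have w: "w \<le> T * w" using assms mult_right_mono[of 1 T w] by simp
  have "0 \<le> t * w" using assms by simp
  with tw assms show "0 \<le> - ln (1 - t * w)" "- ln (1 - t * w) \<le> 2 * T * w"
    using ln_one_minus_bounds(1,2)[of "t * w"] by auto
  have "0 \<le> - ln (1 - w)" "- ln (1 - w) \<le> 2 * w"
    using ln_one_minus_bounds(1,2)[of w] w assms by auto
  then show "0 \<le> - (t * ln (1 - w))" "- (t * ln (1 - w)) \<le> 2 * T * w"
    using assms mult_mono[of t T "- ln (1 - w)" "2 * w"] by (auto simp: mult_nonneg_nonpos)
  have "\<bar>ln (1 - t * w) - t * ln (1 - w)\<bar> \<le> 2 * (t\<^sup>2 + t) * w\<^sup>2"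
    using assms w tw by (intro ln_one_minus_scaled_approx) auto
  also have "\<dots> \<le> 2 * (T\<^sup>2 + T) * w\<^sup>2"
  proof -
    have "t\<^sup>2 \<le> T\<^sup>2" using assms by (intro power_mono) auto
    then have "2 * (t\<^sup>2 + t) \<le> 2 * (T\<^sup>2 + T)" using assms(2) by simp
    then show ?thesis by (rule mult_right_mono) simp
  qed
  finally show "\<bar>ln (1 - t * w) - t * ln (1 - w)\<bar> \<le> 2 * (T\<^sup>2 + T) * w\<^sup>2" .
qed

definition forbidden_edges :: "nat \<Rightarrow> nat \<Rightarrow> nat \<Rightarrow> nat set set \<Rightarrow> nat set set \<Rightarrow> nat set set" where
  "forbidden_edges n d j J S =
     {e \<in> candidate_edges d n. \<exists>I\<in>J. \<exists>K. I \<subseteq> K \<and> K \<subseteq> e \<and> j + 2 \<le> card K \<and> K \<notin> S}"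

lemma forbidden_edges_subset_supersets:
  "forbidden_edges n d j J S \<subseteq> (\<Union>I\<in>J. supersets n I (j + 2) (d + 1))"
proof
  fix e assume "e \<in> forbidden_edges n d j J S"
  then obtain I K where e: "e \<in> candidate_edges d n" "I \<in> J" "I \<subseteq> K" "K \<subseteq> e" "j + 2 \<le> card K"
    unfolding forbidden_edges_def by blast
  then have "e \<subseteq> {1..n}" unfolding candidate_edges_def by blast
  then have "finite e" by (rule finite_subset) simp
  with e have "j + 2 \<le> card e" using card_mono order.trans by blast
  with e show "e \<in> (\<Union>I\<in>J. supersets n I (j + 2) (d + 1))"
    unfolding candidate_edges_def supersets_def by blast
qed

lemma supersets_subset_forbidden_edges:
  "(\<Union>I\<in>J. supersets n I (j + 2) (d + 1)) \<subseteq> forbidden_edges n d j J S \<union> S"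
proof
  fix e assume "e \<in> (\<Union>I\<in>J. supersets n I (j + 2) (d + 1))"
  then obtain I where "I \<in> J" "I \<subseteq> e" "e \<subseteq> {1..n}" "j + 2 \<le> card e" "card e \<le> d + 1"
    unfolding supersets_def by blast
  moreover from this have "e \<in> candidate_edges d n"
    unfolding candidate_edges_def by simp
  ultimately show "e \<in> forbidden_edges n d j J S \<union> S"
    unfolding forbidden_edges_def by blast
qed

lemma event_A_iff_forbidden_edges_absent:
  assumes "\<And>e. e \<notin> candidate_edges d n \<Longrightarrow> \<not> G e"
  shows "event_A n d j J S G \<longleftrightarrow> (\<forall>e\<in>forbidden_edges n d j J S. \<not> G e)"
proof
  assume A: "event_A n d j J S G"
  show "\<forall>e\<in>forbidden_edges n d j J S. \<not> G e"
  proof (intro ballI notI)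
    fix e assume "e \<in> forbidden_edges n d j J S" "G e"
    then obtain I K where IK: "e \<in> candidate_edges d n" "I \<in> J" "I \<subseteq> K" "K \<subseteq> e" "j + 2 \<le> card K" "K \<notin> S"
      unfolding forbidden_edges_def by blast
    then have e: "e \<subseteq> {1..n}" "card e \<le> d + 1" unfolding candidate_edges_def by auto
    have "finite e" by (rule finite_subset[OF e(1)]) simp
    then have "card K \<le> d + 1" using IK(4) e(2) card_mono by (metis order.trans)
    moreover have "K \<noteq> {}" using IK(5) by auto
    then have "is_simplex n G K"
      unfolding is_simplex_def using IK(4) e(1) \<open>G e\<close> by blast
    ultimately show False
      using A IK unfolding event_A_def by blast
  qed
next
  assume absent: "\<forall>e\<in>forbidden_edges n d j J S. \<not> G e"
  show "event_A n d j J S G"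
    unfolding event_A_def
  proof
    assume "\<exists>I\<in>J. \<exists>K. I \<subseteq> K \<and> j + 2 \<le> card K \<and> card K \<le> d + 1 \<and> K \<notin> S \<and> is_simplex n G K"
    then obtain I K where IK: "I \<in> J" "I \<subseteq> K" "j + 2 \<le> card K" "K \<notin> S" "is_simplex n G K"
      by blast
    moreover have "card K \<noteq> 1" using IK(3) by simp
    ultimately obtain e where "G e" "K \<subseteq> e"
      unfolding is_simplex_def by blast
    moreover from \<open>G e\<close> have "e \<in> candidate_edges d n" using assms by blast
    ultimately have "e \<in> forbidden_edges n d j J S"
      unfolding forbidden_edges_def using IK by blast
    with absent \<open>G e\<close> show False by blast
  qed
qed

lemma prob_event_A:
  "measure_pmf.prob (random_complex d p n) {G. event_A n d j J S G}
     = (\<Prod>e\<in>forbidden_edges n d j J S. pmf (bernoulli_pmf (min (p (card e - 1) n) 1)) False)"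
proof -
  let ?C = "candidate_edges d n" and ?F = "forbidden_edges n d j J S"
  let ?q = "\<lambda>e. bernoulli_pmf (min (p (card e - 1) n) 1)"
  define B where "B e = (if e \<in> ?F then {False} else UNIV)" for e
  have fin: "finite ?C" unfolding candidate_edges_def
    by (rule rev_finite_subset[of "Pow {1..n}"]) auto
  have "?F \<subseteq> ?C" unfolding forbidden_edges_def by blast
  then have Pi_eq: "Pi ?C B = {G. \<forall>e\<in>?F. \<not> G e}"
    unfolding B_def Pi_def by auto
  have "measure_pmf.prob (random_complex d p n) {G. event_A n d j J S G}
      = measure_pmf.prob (Pi_pmf ?C False ?q) (Pi ?C B)"
    unfolding random_complex_def Pi_eq
  proof (rule measure_prob_cong_0)
    fix G assume "G \<in> {G. event_A n d j J S G} - {G. \<forall>e\<in>?F. \<not> G e}"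
    then show "pmf (Pi_pmf ?C False ?q) G = 0"
      using event_A_iff_forbidden_edges_absent set_Pi_pmf_subset[OF fin, of False ?q]
      by (auto simp: set_pmf_eq)
  next
    fix G assume "G \<in> {G. \<forall>e\<in>?F. \<not> G e} - {G. event_A n d j J S G}"
    then show "pmf (Pi_pmf ?C False ?q) G = 0"
      using event_A_iff_forbidden_edges_absent set_Pi_pmf_subset[OF fin, of False ?q]
      by (auto simp: set_pmf_eq)
  qed
  also have "\<dots> = (\<Prod>e\<in>?C. measure_pmf.prob (?q e) (B e))"
    by (rule measure_Pi_pmf_Pi[OF fin])
  also have "\<dots> = (\<Prod>e\<in>?C. if e \<in> ?F then pmf (?q e) False else 1)"
    unfolding B_def by (intro prod.cong) (auto simp: measure_pmf_single)
  also have "\<dots> = (\<Prod>e\<in>?C \<inter> ?F. pmf (?q e) False)"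
    by (rule prod.inter_restrict[OF fin, symmetric])
  also have "?C \<inter> ?F = ?F"
    using \<open>?F \<subseteq> ?C\<close> by blast
  finally show ?thesis .
qed

lemma supersets_card_index: "e \<in> supersets n L (j + 2) (d + 1) \<Longrightarrow> card e - 1 \<in> {j+1..d}"
  unfolding supersets_def by auto

definition direction_bounded :: "nat \<Rightarrow> nat \<Rightarrow> real \<Rightarrow> (nat \<Rightarrow> real) \<Rightarrow> nat \<Rightarrow> bool" where
  "direction_bounded d j C x n \<longleftrightarrow>
     (\<forall>k\<in>{j+1..d}. 0 \<le> x k \<and> x k * real n ^ (k - j) \<le> C * ln (real n))"

lemma direction_bounded_nonneg:
  "direction_bounded d j C x n \<Longrightarrow> k \<in> {j+1..d} \<Longrightarrow> 0 \<le> x k"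
  unfolding direction_bounded_def by blast

lemma direction_bounded_le:
  assumes "direction_bounded d j C x n" "1 \<le> n" "k \<in> {j+1..d}"
  shows "x k \<le> C * ln (real n) / real n"
proof -
  have "real n ^ 1 \<le> real n ^ (k - j)"
    using assms(2,3) by (intro power_increasing) auto
  then have "x k * real n \<le> x k * real n ^ (k - j)"
    using direction_bounded_nonneg[OF assms(1,3)] by (simp add: mult_left_mono)
  also have "\<dots> \<le> C * ln (real n)"
    using assms(1,3) unfolding direction_bounded_def by blast
  finally show ?thesis
    using assms(2) by (simp add: field_simps)
qed

lemma sum_supersets_weight_le:
  assumes "direction_bounded d j C x n" "L \<subseteq> {1..n}" "Suc j \<le> card L" "card L \<le> j + 2"
  shows "real n ^ (card L - Suc j) * (\<Sum>e\<in>supersets n L (j + 2) (d + 1). x (card e - 1))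
           \<le> real (d - j) * (C * ln (real n))"
proof -
  have sum_eq: "(\<Sum>e\<in>supersets n L (j + 2) (d + 1). x (card e - 1))
      = (\<Sum>s=j+2..d+1. real ((n - card L) choose (s - card L)) * x (s - 1))"
    using assms(2,4) by (rule sum_supersets_of_card)
  have term_le: "real n ^ (card L - Suc j) * (real ((n - card L) choose (s - card L)) * x (s - 1))
                   \<le> C * ln (real n)" if s: "s \<in> {j+2..d+1}" for s
  proof -
    have "(n - card L) choose (s - card L) \<le> (n - card L) ^ (s - card L)"
      by (cases "s - card L \<le> n - card L") (simp_all add: binomial_le_pow binomial_eq_0)
    also have "\<dots> \<le> n ^ (s - card L)"
      by (intro power_mono) auto
    finally have "real ((n - card L) choose (s - card L)) \<le> real n ^ (s - card L)"
      by (metis of_nat_le_iff of_nat_power)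
    moreover have k: "s - 1 \<in> {j+1..d}" using s by auto
    then have "0 \<le> x (s - 1)"
      by (rule direction_bounded_nonneg[OF assms(1)])
    ultimately have "real n ^ (card L - Suc j) * (real ((n - card L) choose (s - card L)) * x (s - 1))
        \<le> real n ^ (card L - Suc j) * (real n ^ (s - card L) * x (s - 1))"
      by (intro mult_left_mono mult_right_mono) auto
    also have "\<dots> = x (s - 1) * real n ^ (s - 1 - j)"
      using s assms(3,4) by (simp add: power_add[symmetric])
    also have "\<dots> \<le> C * ln (real n)"
      using assms(1) k unfolding direction_bounded_def by blast
    finally show ?thesis .
  qed
  have "real n ^ (card L - Suc j) * (\<Sum>e\<in>supersets n L (j + 2) (d + 1). x (card e - 1))
      = (\<Sum>s=j+2..d+1. real n ^ (card L - Suc j) * (real ((n - card L) choose (s - card L)) * x (s - 1)))"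
    unfolding sum_eq by (rule sum_distrib_left)
  also have "\<dots> \<le> (\<Sum>s=j+2..d+1. C * ln (real n))"
    by (rule sum_mono) (rule term_le)
  finally show ?thesis by simp
qed

lemma sum_Int_supersets_weight_le:
  assumes "direction_bounded d j C x n" "I \<subseteq> {1..n}" "I' \<subseteq> {1..n}"
    and "card I = j + 1" "card I' = j + 1" "I \<noteq> I'"
  shows "real n * (\<Sum>e\<in>supersets n I (j + 2) (d + 1) \<inter> supersets n I' (j + 2) (d + 1). x (card e - 1))
           \<le> real (d - j) * (C * ln (real n))"
proof -
  have "finite I" using assms(2) finite_subset by blast
  with assms(4-6) have "\<not> I' \<subseteq> I" using card_subset_eq by metis
  then obtain v where v: "v \<in> I'" "v \<notin> I" by blast
  let ?L = "insert v I"
  have L: "?L \<subseteq> {1..n}" "card ?L = j + 2"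
    using v assms(2,3,4) \<open>finite I\<close> by auto
  have "(\<Sum>e\<in>supersets n I (j + 2) (d + 1) \<inter> supersets n I' (j + 2) (d + 1). x (card e - 1))
      \<le> (\<Sum>e\<in>supersets n ?L (j + 2) (d + 1). x (card e - 1))" (is "?A \<le> ?B")
  proof (rule sum_mono2)
    show "supersets n I (j + 2) (d + 1) \<inter> supersets n I' (j + 2) (d + 1) \<subseteq> supersets n ?L (j + 2) (d + 1)"
      using v unfolding supersets_def by auto
    show "\<And>e. e \<in> supersets n ?L (j + 2) (d + 1) - supersets n I (j + 2) (d + 1) \<inter> supersets n I' (j + 2) (d + 1)
             \<Longrightarrow> 0 \<le> x (card e - 1)"
      using direction_bounded_nonneg[OF assms(1) supersets_card_index] by blast
  qed simp
  then have "real n * ?A \<le> real n * ?B"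
    by (rule mult_left_mono) simp
  also have "real n * ?B = real n ^ (card ?L - Suc j) * ?B"
    using L by simp
  also have "\<dots> \<le> real (d - j) * (C * ln (real n))"
    using L by (intro sum_supersets_weight_le assms(1)) auto
  finally show ?thesis .
qed

lemma eventually_ln_ge_1: "eventually (\<lambda>n. 1 \<le> ln (real n)) sequentially"
  using filterlim_compose[OF ln_at_top filterlim_real_sequentially]
  by (simp add: filterlim_at_top)

lemma admissible_factor_bound:
  fixes \<alpha> \<gamma> :: real and \<beta> :: "nat \<Rightarrow> real"
  assumes "\<alpha> = 0 \<or> \<gamma> = 0" "0 \<le> \<alpha>" "0 \<le> \<gamma>"
    and "\<alpha> = 0 \<Longrightarrow> (\<forall>n. \<beta> n = 0) \<or> ((\<forall>n. 0 < \<beta> n) \<and> (\<forall>\<epsilon>>0. \<beta> \<in> o(\<lambda>n. real n powr \<epsilon>)))"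
    and "\<gamma> = 0 \<Longrightarrow> (\<lambda>n. \<bar>\<beta> n\<bar>) \<in> o(\<lambda>n. ln (real n))"
  shows "eventually (\<lambda>n. 0 \<le> (\<alpha> * ln (real n) + \<beta> n) / real n powr \<gamma>
                          \<and> (\<alpha> * ln (real n) + \<beta> n) / real n powr \<gamma> \<le> (2 * \<alpha> + 1) * ln (real n))
           sequentially"
proof -
  have ev: "eventually (\<lambda>n. 1 \<le> n \<and> 1 \<le> ln (real n)) sequentially"
    using eventually_ge_at_top[of 1] eventually_ln_ge_1 by eventually_elim simp
  consider "\<gamma> = 0" "\<alpha> > 0" | "\<alpha> = 0" "\<forall>n. \<beta> n = 0" | "\<alpha> = 0" "\<forall>n. 0 < \<beta> n" "\<gamma> = 0"
    | "\<alpha> = 0" "\<forall>n. 0 < \<beta> n" "\<beta> \<in> o(\<lambda>n. real n powr \<gamma>)" "\<gamma> > 0"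
    using assms by force
  then show ?thesis
  proof cases
    case 1
    have "eventually (\<lambda>n. \<bar>\<beta> n\<bar> \<le> \<alpha> * ln (real n)) sequentially"
      using landau_o.smallD[OF assms(5)[OF 1(1)] 1(2)] ev by eventually_elim auto
    with ev show ?thesis
      by eventually_elim (use 1 in \<open>auto simp: abs_le_iff algebra_simps\<close>)
  next
    case 2
    from ev show ?thesis by eventually_elim (use 2 in auto)
  next
    case 3
    have "eventually (\<lambda>n. \<bar>\<beta> n\<bar> \<le> 1 * ln (real n)) sequentially"
      using landau_o.smallD[OF assms(5)[OF 3(3)] zero_less_one] ev by eventually_elim auto
    with ev show ?thesis
      by eventually_elim (use 3 in \<open>auto simp: less_imp_le\<close>)
  next
    case 4
    have "eventually (\<lambda>n. \<beta> n \<le> 1 * real n powr \<gamma>) sequentially"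
      using landau_o.smallD[OF 4(3) zero_less_one] by eventually_elim auto
    with ev show ?thesis
    proof eventually_elim
      case (elim n)
      then have "\<beta> n / real n powr \<gamma> \<le> 1" by simp
      then have "\<beta> n / real n powr \<gamma> \<le> ln (real n)" using elim(1) by linarith
      moreover have "0 \<le> \<beta> n / real n powr \<gamma>" using 4(2) by (simp add: less_imp_le)
      ultimately show ?case using 4(1) by simp
    qed
  qed
qed

lemma admissible_coordinate_bound:
  fixes \<alpha> \<gamma> :: real and \<beta> p :: "nat \<Rightarrow> real"
  assumes "j \<le> k"
    and p: "\<And>n. p n = (\<alpha> * ln (real n) + \<beta> n) / real n powr (real k - real j + \<gamma>) * fact (k - j)"
    and "\<alpha> = 0 \<or> \<gamma> = 0" "0 \<le> \<alpha>" "0 \<le> \<gamma>"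
    and "\<alpha> = 0 \<Longrightarrow> (\<forall>n. \<beta> n = 0) \<or> ((\<forall>n. 0 < \<beta> n) \<and> (\<forall>\<epsilon>>0. \<beta> \<in> o(\<lambda>n. real n powr \<epsilon>)))"
    and "\<gamma> = 0 \<Longrightarrow> (\<lambda>n. \<bar>\<beta> n\<bar>) \<in> o(\<lambda>n. ln (real n))"
  shows "eventually (\<lambda>n. 0 \<le> p n \<and> p n * real n ^ (k - j) \<le> fact (k - j) * (2 * \<alpha> + 1) * ln (real n))
           sequentially"
proof -
  let ?Q = "\<lambda>n. (\<alpha> * ln (real n) + \<beta> n) / real n powr \<gamma>"
  have scale: "p n * real n ^ (k - j) = fact (k - j) * ?Q n" if "1 \<le> n" for n
  proof -
    have "real n powr (real k - real j + \<gamma>) = real n powr real (k - j) * real n powr \<gamma>"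
      using assms(1) by (simp add: powr_add of_nat_diff)
    also have "real n powr real (k - j) = real n ^ (k - j)"
      using that by (intro powr_realpow) simp
    finally have "real n powr (real k - real j + \<gamma>) = real n ^ (k - j) * real n powr \<gamma>" .
    moreover have "real n ^ (k - j) \<noteq> 0" using that by simp
    ultimately show ?thesis by (simp add: p)
  qed
  have "eventually (\<lambda>n. 0 \<le> ?Q n \<and> ?Q n \<le> (2 * \<alpha> + 1) * ln (real n)) sequentially"
    using assms(3-) by (rule admissible_factor_bound)
  with eventually_ge_at_top[of 1] show ?thesis
  proof eventually_elim
    case (elim n)
    have "0 \<le> fact (k - j) * ?Q n" using elim(2) by (intro mult_nonneg_nonneg) auto
    then have "0 \<le> p n * real n ^ (k - j)" unfolding scale[OF elim(1)] .
    moreover have "0 < real n ^ (k - j)" using elim(1) by simp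
    ultimately have "0 \<le> p n" by (simp add: zero_le_mult_iff)
    moreover have "fact (k - j) * ?Q n \<le> fact (k - j) * ((2 * \<alpha> + 1) * ln (real n))"
      using elim(2) by (intro mult_left_mono) auto
    ultimately show ?case unfolding scale[OF elim(1)] by (simp add: mult.assoc)
  qed
qed

lemma j_admissible_direction_bounded:
  assumes "j_admissible d j pbar"
  obtains C where "0 \<le> C" "eventually (\<lambda>n. direction_bounded d j C (\<lambda>k. pbar k n) n) sequentially"
proof -
  obtain \<alpha> \<gamma> :: "nat \<Rightarrow> real" and \<beta> :: "nat \<Rightarrow> nat \<Rightarrow> real" where
    pbar: "\<And>k n. k \<in> {1..d} \<Longrightarrow>
      pbar k n = (\<alpha> k * ln (real n) + \<beta> k n) / real n powr (real k - real j + \<gamma> k) * fact (k - j)"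
    and coeffs: "\<And>k. k \<in> {1..d} \<Longrightarrow> (\<alpha> k = 0 \<or> \<gamma> k = 0) \<and> 0 \<le> \<alpha> k \<and> 0 \<le> \<gamma> k"
    and \<beta>_small: "\<And>k. k \<in> {1..d} \<Longrightarrow> \<alpha> k = 0 \<Longrightarrow>
      (\<forall>n. \<beta> k n = 0) \<or> ((\<forall>n. 0 < \<beta> k n) \<and> (\<forall>\<epsilon>>0. \<beta> k \<in> o(\<lambda>n. real n powr \<epsilon>)))"
    and \<beta>_log: "\<And>k. k \<in> {1..d} \<Longrightarrow> \<gamma> k = 0 \<Longrightarrow> (\<lambda>n. \<bar>\<beta> k n\<bar>) \<in> o(\<lambda>n. ln (real n))"
    using assms unfolding j_admissible_def by blast
  define c where "c k = fact (k - j) * (2 * \<alpha> k + 1)" for k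
  have c_nonneg: "0 \<le> c k" if "k \<in> {j+1..d}" for k
    using coeffs[of k] that by (simp add: c_def)
  have "eventually (\<lambda>n. 0 \<le> pbar k n \<and> pbar k n * real n ^ (k - j) \<le> c k * ln (real n)) sequentially"
    if "k \<in> {j+1..d}" for k
    using that coeffs[of k] \<beta>_small[of k] \<beta>_log[of k] pbar[of k] unfolding c_def
    by (intro admissible_coordinate_bound) auto
  then have "eventually (\<lambda>n. \<forall>k\<in>{j+1..d}. 0 \<le> pbar k n \<and> pbar k n * real n ^ (k - j) \<le> c k * ln (real n))
      sequentially"
    by (intro eventually_ball_finite) auto
  with eventually_ln_ge_1 have "eventually (\<lambda>n. direction_bounded d j (sum c {j+1..d}) (\<lambda>k. pbar k n) n) sequentially"
    unfolding direction_bounded_def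
  proof eventually_elim
    case (elim n)
    have "c k * ln (real n) \<le> sum c {j+1..d} * ln (real n)" if "k \<in> {j+1..d}" for k
      using elim(1) c_nonneg that by (intro mult_right_mono member_le_sum) auto
    with elim(2) show ?case by (meson order_trans)
  qed
  moreover have "0 \<le> sum c {j+1..d}" using c_nonneg by (rule sum_nonneg)
  ultimately show ?thesis using that by blast
qed

lemma qbar_powr_eq_exp:
  assumes "\<And>k. k \<in> {j+1..d} \<Longrightarrow> pbar k n < 1"
  shows "qbar d j pbar n powr c
           = exp (c * (\<Sum>k=j+1..d. real ((n - j - 1) choose (k - j)) * ln (1 - pbar k n)))"
proof -
  have pos: "0 < (1 - pbar k n) ^ ((n - j - 1) choose (k - j))" if "k \<in> {j+1..d}" for k
    using assms[OF that] by simp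
  then have "0 < qbar d j pbar n"
    unfolding qbar_def by (intro prod_pos) auto
  moreover have "ln (qbar d j pbar n) = (\<Sum>k=j+1..d. ln ((1 - pbar k n) ^ ((n - j - 1) choose (k - j))))"
    unfolding qbar_def
    by (rule ln_prod[OF finite_atLeastAtMost]) (rule pos[THEN less_imp_neq, THEN not_sym])
  ultimately show ?thesis
    by (simp add: powr_def ln_realpow)
qed

definition log_ratio :: "nat \<Rightarrow> nat \<Rightarrow> nat \<Rightarrow> real \<Rightarrow> (nat \<Rightarrow> nat \<Rightarrow> real) \<Rightarrow> nat set set \<Rightarrow> nat set set \<Rightarrow> real"
  where "log_ratio n d j t pbar J S =
    (\<Sum>e\<in>forbidden_edges n d j J S. ln (1 - t * pbar (card e - 1) n))
    - t * card J * (\<Sum>k=j+1..d. real ((n - j - 1) choose (k - j)) * ln (1 - pbar k n))"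

lemma prob_event_A_eq_exp:
  assumes p: "\<And>k. p k n = t * pbar k n" and t: "0 \<le> t"
    and small: "\<And>k. k \<in> {j+1..d} \<Longrightarrow> 0 \<le> pbar k n \<and> pbar k n < 1 \<and> t * pbar k n < 1"
  shows "measure_pmf.prob (random_complex d p n) {G. event_A n d j J S G}
           = exp (log_ratio n d j t pbar J S) * qbar d j pbar n powr (t * card J)"
proof -
  let ?F = "forbidden_edges n d j J S"
  let ?main = "\<Sum>k=j+1..d. real ((n - j - 1) choose (k - j)) * ln (1 - pbar k n)"
  have "measure_pmf.prob (random_complex d p n) {G. event_A n d j J S G}
      = (\<Prod>e\<in>?F. pmf (bernoulli_pmf (min (p (card e - 1) n) 1)) False)"
    by (rule prob_event_A)
  also have "\<dots> = (\<Prod>e\<in>?F. exp (ln (1 - t * pbar (card e - 1) n)))"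
  proof (rule prod.cong[OF refl])
    fix e assume "e \<in> ?F"
    then have "card e - 1 \<in> {j+1..d}"
      using forbidden_edges_subset_supersets supersets_card_index by blast
    then have "0 \<le> t * pbar (card e - 1) n" "t * pbar (card e - 1) n < 1"
      using small t by auto
    then show "pmf (bernoulli_pmf (min (p (card e - 1) n) 1)) False = exp (ln (1 - t * pbar (card e - 1) n))"
      using p by simp
  qed
  also have "\<dots> = exp (\<Sum>e\<in>?F. ln (1 - t * pbar (card e - 1) n))"
    unfolding forbidden_edges_def candidate_edges_def
    by (rule exp_sum[symmetric]) (rule rev_finite_subset[of "Pow {1..n}"], auto)
  also have "\<dots> = exp (log_ratio n d j t pbar J S) * exp (t * card J * ?main)"
    unfolding log_ratio_def by (simp add: exp_add[symmetric])
  also have "exp (t * card J * ?main) = qbar d j pbar n powr (t * card J)"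
    using small by (subst qbar_powr_eq_exp) auto
  finally show ?thesis .
qed

locale forbidden_edges_estimate =
  fixes n d j mJ mS :: nat and C t T :: real and pbar :: "nat \<Rightarrow> nat \<Rightarrow> real"
    and J S :: "nat set set"
  assumes bounded: "direction_bounded d j C (\<lambda>k. pbar k n) n" and C_nonneg: "0 \<le> C"
    and ln_n: "1 \<le> ln (real n)" and n_large: "2 * T * C * ln (real n) \<le> real n"
    and finite_J: "finite J" and card_J: "card J \<le> mJ"
    and J_sets: "\<And>I. I \<in> J \<Longrightarrow> I \<subseteq> {1..n} \<and> card I = j + 1"
    and finite_S: "finite S" and card_S: "card S \<le> mS"
    and t_nonneg: "0 \<le> t" and t_le_T: "t \<le> T" and T_ge_1: "1 \<le> T"
begin

abbreviation cover :: "nat set \<Rightarrow> nat set set" where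
  "cover I \<equiv> supersets n I (j + 2) (d + 1)"

abbreviation weight :: "nat set \<Rightarrow> real" where
  "weight e \<equiv> pbar (card e - 1) n"

abbreviation log_term :: "nat set \<Rightarrow> real" where
  "log_term e \<equiv> - ln (1 - t * weight e)"

abbreviation qbar_term :: "nat set \<Rightarrow> real" where
  "qbar_term e \<equiv> - (t * ln (1 - weight e))"

abbreviation \<delta> :: real where
  "\<delta> \<equiv> C * ln (real n) / real n"

lemma n_ge_1: "1 \<le> n"
  using ln_n by (cases n) auto

lemma pbar_bounds:
  assumes "k \<in> {j+1..d}"
  shows "0 \<le> pbar k n" "pbar k n \<le> \<delta>" "T * pbar k n \<le> 1/2"
proof -
  show "0 \<le> pbar k n" using direction_bounded_nonneg[OF bounded assms] .
  show le: "pbar k n \<le> \<delta>" using direction_bounded_le[OF bounded n_ge_1 assms] .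
  have "T * pbar k n \<le> T * \<delta>" using le T_ge_1 by (intro mult_left_mono) auto
  also have "\<dots> \<le> 1/2" using n_large n_ge_1 by (simp add: field_simps)
  finally show "T * pbar k n \<le> 1/2" .
qed

lemma prob_event_A_eq:
  assumes "\<And>k. p k n = t * pbar k n"
  shows "measure_pmf.prob (random_complex d p n) {G. event_A n d j J S G}
           = exp (log_ratio n d j t pbar J S) * qbar d j pbar n powr (t * card J)"
proof (rule prob_event_A_eq_exp[where p = p and pbar = pbar, OF assms t_nonneg])
  fix k assume k: "k \<in> {j+1..d}"
  have "pbar k n \<le> T * pbar k n"
    using pbar_bounds(1)[OF k] T_ge_1 mult_right_mono[of 1 T "pbar k n"] by simp
  moreover have "t * pbar k n \<le> T * pbar k n"
    using pbar_bounds(1)[OF k] t_le_T by (rule mult_right_mono[rotated])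
  ultimately show "0 \<le> pbar k n \<and> pbar k n < 1 \<and> t * pbar k n < 1"
    using pbar_bounds[OF k] by auto
qed

lemma term_bounds:
  assumes "e \<in> cover I"
  shows "0 \<le> log_term e" "log_term e \<le> 2 * T * \<delta>"
    and "0 \<le> qbar_term e" "qbar_term e \<le> 2 * T * weight e"
    and "\<bar>log_term e - qbar_term e\<bar> \<le> 2 * (T\<^sup>2 + T) * \<delta> * weight e"
proof -
  note weight_bounds = pbar_bounds[OF supersets_card_index[OF assms]]
  note bounds = ln_one_minus_scaled_bounds[OF t_nonneg t_le_T T_ge_1 weight_bounds(1,3)]
  show "0 \<le> log_term e" "0 \<le> qbar_term e" "qbar_term e \<le> 2 * T * weight e"
    using bounds(1,3,4) by auto
  have "2 * T * weight e \<le> 2 * T * \<delta>"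
    using weight_bounds(2) T_ge_1 by (intro mult_left_mono) auto
  with bounds(2) show "log_term e \<le> 2 * T * \<delta>" by linarith
  have "\<bar>log_term e - qbar_term e\<bar> \<le> 2 * (T\<^sup>2 + T) * (weight e)\<^sup>2"
    using bounds(5) by (simp add: abs_minus_commute)
  also have "\<dots> \<le> 2 * (T\<^sup>2 + T) * \<delta> * weight e"
  proof -
    have "weight e * weight e \<le> \<delta> * weight e"
      using weight_bounds(1,2) by (intro mult_right_mono)
    moreover have "0 \<le> 2 * (T\<^sup>2 + T)" using T_ge_1 by simp
    ultimately show ?thesis
      unfolding power2_eq_square mult.assoc[of "2 * (T * T + T)"] by (rule mult_left_mono)
  qed
  finally show "\<bar>log_term e - qbar_term e\<bar> \<le> 2 * (T\<^sup>2 + T) * \<delta> * weight e" .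
qed

lemma sum_qbar_term_cover:
  assumes "I \<in> J"
  shows "sum qbar_term (cover I)
           = - (t * (\<Sum>k=j+1..d. real ((n - j - 1) choose (k - j)) * ln (1 - pbar k n)))"
  using sum_supersets_shift[of I n j "\<lambda>k. - (t * ln (1 - pbar k n))" d] J_sets[OF assms]
  by (simp add: sum_distrib_left sum_negf algebra_simps)

lemma sum_weight_cover_le:
  assumes "I \<in> J"
  shows "sum weight (cover I) \<le> real d * (C * ln (real n))"
proof -
  have "real n ^ (card I - Suc j) * sum weight (cover I) \<le> real (d - j) * (C * ln (real n))"
    using J_sets[OF assms] by (intro sum_supersets_weight_le bounded) auto
  also have "\<dots> \<le> real d * (C * ln (real n))"
    using C_nonneg ln_n by (intro mult_right_mono) auto
  finally show ?thesis using J_sets[OF assms] by simp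
qed

lemma sum_term_diff_cover_le:
  assumes "I \<in> J"
  shows "(\<Sum>e\<in>cover I. \<bar>log_term e - qbar_term e\<bar>) \<le> 2 * (T\<^sup>2 + T) * \<delta> * (real d * (C * ln (real n)))"
proof -
  have "(\<Sum>e\<in>cover I. \<bar>log_term e - qbar_term e\<bar>) \<le> (\<Sum>e\<in>cover I. 2 * (T\<^sup>2 + T) * \<delta> * weight e)"
    using term_bounds(5) by (intro sum_mono) auto
  also have "\<dots> = 2 * (T\<^sup>2 + T) * \<delta> * sum weight (cover I)"
    by (simp add: sum_distrib_left)
  also have "\<dots> \<le> 2 * (T\<^sup>2 + T) * \<delta> * (real d * (C * ln (real n)))"
    using sum_weight_cover_le[OF assms] T_ge_1 C_nonneg ln_n n_ge_1 by (intro mult_left_mono) auto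
  finally show ?thesis .
qed

lemma sum_log_term_Int_le:
  "sum log_term (\<Union>(cover ` J) \<inter> S) \<le> real mS * (2 * T * \<delta>)"
proof -
  have "sum log_term (\<Union>(cover ` J) \<inter> S) \<le> real (card (\<Union>(cover ` J) \<inter> S)) * (2 * T * \<delta>)"
    using term_bounds(2) by (intro sum_bounded_above) auto
  also have "\<dots> \<le> real mS * (2 * T * \<delta>)"
    using card_mono[OF finite_S, of "\<Union>(cover ` J) \<inter> S"] card_S T_ge_1 C_nonneg ln_n
    by (intro mult_right_mono) auto
  finally show ?thesis .
qed

lemma sum_qbar_term_Int_cover_le:
  assumes "I \<in> J" "I' \<in> J" "I \<noteq> I'"
  shows "sum qbar_term (cover I \<inter> cover I') \<le> 2 * T * (real d * \<delta>)"
proof -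
  have "real n * sum weight (cover I \<inter> cover I') \<le> real (d - j) * (C * ln (real n))"
    using J_sets assms by (intro sum_Int_supersets_weight_le bounded) auto
  also have "\<dots> \<le> real d * (C * ln (real n))"
    using C_nonneg ln_n by (intro mult_right_mono) auto
  finally have "sum weight (cover I \<inter> cover I') \<le> real d * \<delta>"
    using n_ge_1 by (simp add: field_simps)
  then have "2 * T * sum weight (cover I \<inter> cover I') \<le> 2 * T * (real d * \<delta>)"
    using T_ge_1 by (intro mult_left_mono) auto
  moreover have "sum qbar_term (cover I \<inter> cover I') \<le> (\<Sum>e\<in>cover I \<inter> cover I'. 2 * T * weight e)"
    using term_bounds(4) by (intro sum_mono) auto
  ultimately show ?thesis
    by (simp add: sum_distrib_left)
qed

lemma sum_sum_term_diff_le: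
  "(\<Sum>I\<in>J. \<Sum>e\<in>cover I. \<bar>log_term e - qbar_term e\<bar>)
     \<le> real mJ * (2 * (T\<^sup>2 + T) * \<delta> * (real d * (C * ln (real n))))"
proof -
  have "(\<Sum>I\<in>J. \<Sum>e\<in>cover I. \<bar>log_term e - qbar_term e\<bar>)
      \<le> real (card J) * (2 * (T\<^sup>2 + T) * \<delta> * (real d * (C * ln (real n))))"
    using sum_term_diff_cover_le by (intro sum_bounded_above) auto
  also have "\<dots> \<le> real mJ * (2 * (T\<^sup>2 + T) * \<delta> * (real d * (C * ln (real n))))"
    using card_J T_ge_1 C_nonneg ln_n n_ge_1 by (intro mult_right_mono) auto
  finally show ?thesis .
qed

lemma sum_pairs_qbar_term_le:
  "(\<Sum>I\<in>J. \<Sum>I'\<in>J - {I}. sum qbar_term (cover I \<inter> cover I'))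
     \<le> real mJ ^ 2 * (2 * T * (real d * \<delta>))"
proof -
  let ?b = "2 * T * (real d * \<delta>)"
  have b: "0 \<le> ?b" using T_ge_1 C_nonneg ln_n n_ge_1 by simp
  have "(\<Sum>I'\<in>J - {I}. sum qbar_term (cover I \<inter> cover I')) \<le> (\<Sum>I'\<in>J. ?b)" if "I \<in> J" for I
  proof -
    have "(\<Sum>I'\<in>J - {I}. sum qbar_term (cover I \<inter> cover I')) \<le> (\<Sum>I'\<in>J - {I}. ?b)"
      using sum_qbar_term_Int_cover_le that by (intro sum_mono) auto
    also have "\<dots> \<le> (\<Sum>I'\<in>J. ?b)"
      using finite_J b by (intro sum_mono2) auto
    finally show ?thesis .
  qed
  then have "(\<Sum>I\<in>J. \<Sum>I'\<in>J - {I}. sum qbar_term (cover I \<inter> cover I')) \<le> (\<Sum>I\<in>J. \<Sum>I'\<in>J. ?b)"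
    by (rule sum_mono)
  also have "\<dots> = real (card J) ^ 2 * ?b"
    by (simp add: power2_eq_square)
  also have "\<dots> \<le> real mJ ^ 2 * ?b"
    using card_J b by (intro mult_right_mono power_mono) auto
  finally show ?thesis .
qed

theorem log_ratio_bound:
  "\<bar>log_ratio n d j t pbar J S\<bar>
     \<le> (real mJ * d * 2 * (T\<^sup>2 + T) * C\<^sup>2 * (ln (real n))\<^sup>2
         + (real mS + real mJ ^ 2 * d) * 2 * T * C * ln (real n)) / real n"
proof -
  let ?F = "forbidden_edges n d j J S"
  let ?main = "\<Sum>k=j+1..d. real ((n - j - 1) choose (k - j)) * ln (1 - pbar k n)"
  have "\<bar>sum log_term ?F - (\<Sum>I\<in>J. sum qbar_term (cover I))\<bar>
      \<le> (\<Sum>I\<in>J. \<Sum>e\<in>cover I. \<bar>log_term e - qbar_term e\<bar>) + sum log_term (\<Union>(cover ` J) \<inter> S)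
        + (\<Sum>I\<in>J. \<Sum>I'\<in>J - {I}. sum qbar_term (cover I \<inter> cover I'))"
    using forbidden_edges_subset_supersets supersets_subset_forbidden_edges term_bounds(1,3)
    by (intro sum_UN_approx finite_J finite_supersets) auto
  also have "(\<Sum>I\<in>J. sum qbar_term (cover I)) = - (t * card J * ?main)"
    using sum_qbar_term_cover by simp
  finally have "\<bar>sum log_term ?F + t * card J * ?main\<bar>
      \<le> real mJ * (2 * (T\<^sup>2 + T) * \<delta> * (real d * (C * ln (real n)))) + real mS * (2 * T * \<delta>)
        + real mJ ^ 2 * (2 * T * (real d * \<delta>))"
    using sum_sum_term_diff_le sum_log_term_Int_le sum_pairs_qbar_term_le by simp
  moreover have "sum log_term ?F = - (\<Sum>e\<in>?F. ln (1 - t * pbar (card e - 1) n))"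
    by (simp add: sum_negf)
  ultimately show ?thesis
    using n_ge_1 unfolding log_ratio_def
    by (simp add: abs_minus_commute field_simps power2_eq_square)
qed

end

lemma asymp_equiv_exp_factor:
  fixes f g h :: "'a \<Rightarrow> real"
  assumes "(h \<longlongrightarrow> 0) F" "eventually (\<lambda>x. f x = exp (h x) * g x) F"
  shows "f \<sim>[F] g"
proof -
  have "(\<lambda>x. exp (h x)) \<sim>[F] (\<lambda>_. 1)"
    using assms(1) by (intro tendsto_imp_asymp_equiv_const) (auto intro!: tendsto_eq_intros)
  then have "(\<lambda>x. exp (h x) * g x) \<sim>[F] (\<lambda>x. 1 * g x)"
    by (intro asymp_equiv_mult) auto
  then show ?thesis
    by (rule asymp_equiv_transfer) (use assms(2) in \<open>auto elim: eventually_mono\<close>)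
qed

theorem proposition4p12:
  fixes d j :: nat
    and pbar :: "nat \<Rightarrow> nat \<Rightarrow> real"
    and \<tau> :: "nat \<Rightarrow> real"
    and J S :: "nat \<Rightarrow> nat set set"
  assumes "d \<ge> 2" and "1 \<le> j" and "j \<le> d - 1"
    and "j_admissible d j pbar"
    and "\<And>n. \<tau> n \<ge> 0" and "\<tau> \<in> O(\<lambda>_. 1)"
    and "\<And>n. finite (J n)" and "\<exists>C. \<forall>n. card (J n) \<le> C"
    and "\<And>n I. I \<in> J n \<Longrightarrow> I \<subseteq> {1..n} \<and> card I = j + 1"
    and "\<And>n. finite (S n)" and "\<exists>C. \<forall>n. card (S n) \<le> C"
    and "\<And>n K. K \<in> S n \<Longrightarrow> K \<subseteq> {1..n} \<and> j + 2 \<le> card K \<and> card K \<le> d + 1"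
  shows "(\<lambda>n. measure_pmf.prob (random_complex d (\<lambda>k n. \<tau> n * pbar k n) n)
                 {G. event_A n d j (J n) (S n) G})
         \<sim>[sequentially] (\<lambda>n. qbar d j pbar n powr (\<tau> n * real (card (J n))))"
proof -
  obtain c where "eventually (\<lambda>n. norm (\<tau> n) \<le> c * norm (1::real)) sequentially"
    using landau_o.bigE[OF assms(6)] by blast
  then have \<tau>_le: "eventually (\<lambda>n. \<tau> n \<le> max c 1) sequentially"
    by eventually_elim auto
  obtain mJ mS where mJ: "\<And>n. card (J n) \<le> mJ" and mS: "\<And>n. card (S n) \<le> mS"
    using assms(8,11) by blast
  obtain C where C: "0 \<le> C" "eventually (\<lambda>n. direction_bounded d j C (\<lambda>k. pbar k n) n) sequentially"
    using j_admissible_direction_bounded[OF assms(4)] by blast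
  define T where "T = max c 1"
  have "eventually (\<lambda>n. 2 * T * C * ln (real n) \<le> real n) sequentially"
    by real_asymp
  with C(2) eventually_ln_ge_1 \<tau>_le
  have est: "eventually (\<lambda>n. forbidden_edges_estimate n d j mJ mS C (\<tau> n) T pbar (J n) (S n)) sequentially"
    by eventually_elim (use C(1) mJ mS assms(5,7,9,10) in \<open>auto simp: forbidden_edges_estimate_def T_def\<close>)
  define \<epsilon> where "\<epsilon> n = (real mJ * d * 2 * (T\<^sup>2 + T) * C\<^sup>2 * (ln (real n))\<^sup>2
      + (real mS + real mJ ^ 2 * d) * 2 * T * C * ln (real n)) / real n" for n
  have "(\<lambda>n. log_ratio n d j (\<tau> n) pbar (J n) (S n)) \<longlonglongrightarrow> 0"
  proof (rule Lim_null_comparison)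
    show "eventually (\<lambda>n. norm (log_ratio n d j (\<tau> n) pbar (J n) (S n)) \<le> \<epsilon> n) sequentially"
      using est unfolding \<epsilon>_def real_norm_def
      by eventually_elim (rule forbidden_edges_estimate.log_ratio_bound)
    show "\<epsilon> \<longlonglongrightarrow> 0"
      unfolding \<epsilon>_def by real_asymp
  qed
  moreover from est have "eventually (\<lambda>n. measure_pmf.prob (random_complex d (\<lambda>k n. \<tau> n * pbar k n) n)
      {G. event_A n d j (J n) (S n) G}
      = exp (log_ratio n d j (\<tau> n) pbar (J n) (S n)) * qbar d j pbar n powr (\<tau> n * real (card (J n))))
      sequentially"
    by eventually_elim (rule forbidden_edges_estimate.prob_event_A_eq, simp_all)
  ultimately show ?thesis
    by (rule asymp_equiv_exp_factor)
qed

end
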